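(* Let $\nu\in(-1,-1/2)$ and $\gamma_\nu=-1/2-\nu$. Then there exist constants $C,c>0$ such that for all $t>0$ and $x,y>0$, $$p_t^\nu(x,y)\le C\Big[\frac{1}{\sqrt t}\exp\Big(-\frac{|x-y|^2}{ct}\Big)+\frac1x\Big(\frac xy\Big)^{\gamma_\nu}\chi_{\{y<x/2\}}+\frac1y\Big(\frac yx\Big)^{\gamma_\nu}\chi_{\{x/2\le y\}}\Big].$$
   Context: For $\nu>-1$, $p_t^\nu(x,y)$ denotes the integral kernel of the heat semigroup $e^{-t\mathcal L_\nu}$ of the one-dimensional Laguerre operator $\mathcal L_\nu$ on $(0,\infty)$ (eigenfunctions the Laguerre functions $\varphi_k^\nu$, eigenvalues $4k+2\nu+2$). Explicitly, with $r=e^{-4t}$, $p_t^\nu(x,y)=\frac{2(rxy)^{1/2}}{1-r}\exp\big(-\frac12\frac{1+r}{1-r}(x^2+y^2)\big)I_\nu\big(\frac{2r^{1/2}}{1-r}xy\big)$, where $I_\nu$ is the modified Bessel function of the first kind. $\chi_E$ is the indicator function of $E$. *)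

theory Defs
  imports "HOL-Analysis.Analysis"
begin

definition besselI :: "real \<Rightarrow> real \<Rightarrow> real" where
  "besselI nu z = (\<Sum>k. (z / 2) powr (2 * real k + nu) / (fact k * Gamma (real k + nu + 1)))"

definition laguerre_heat_kernel :: "real \<Rightarrow> real \<Rightarrow> real \<Rightarrow> real \<Rightarrow> real" where
  "laguerre_heat_kernel nu t x y =
     (let r = exp (-4 * t) in
       2 * sqrt (r * x * y) / (1 - r)
       * exp (- (1/2) * ((1 + r) / (1 - r)) * (x^2 + y^2))
       * besselI nu (2 * sqrt r / (1 - r) * x * y))"

end

theory Submission
  imports Defs
begin

text \<open>In Mehler form the kernel is \<open>2b sqrt(xy) exp(-a(x\<^sup>2 + y\<^sup>2)) I\<^sub>\<nu>(2bxy)\<close>.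
  For \<open>-1 < \<nu> < -1/2\<close> the Bessel series is dominated termwise (log-convexity of Gamma
  and the bound \<open>C(2k,k) \<le> 4\<^sup>k / sqrt(3k+1)\<close>) by the even part of a weighted exponential
  series, which gives \<open>I\<^sub>\<nu>(z) \<le> (z/2)\<^sup>\<nu> e\<^sup>z (1+z)\<^sup>-\<^sup>\<nu>\<^sup>-\<^sup>1\<^sup>/\<^sup>2\<close>.
  For \<open>z = 2bxy \<le> 1\<close> this is of order \<open>z\<^sup>\<nu>\<close>, and \<open>u\<^sup>\<nu>\<^sup>+\<^sup>1 e\<^sup>-\<^sup>u \<le> 1\<close> with
  \<open>u = bx\<^sup>2\<close> or \<open>u = by\<^sup>2\<close> leaves exactly the off-diagonal terms. For \<open>z \<ge> 1\<close> it is of order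
  \<open>e\<^sup>z / sqrt z\<close>, so the kernel is at most \<open>4 sqrt(2b) exp(-a(x\<^sup>2+y\<^sup>2) + 2bxy)\<close>:
  a Gaussian in \<open>x - y\<close> of width \<open>sqrt t\<close> when \<open>t \<le> 1\<close>, and a Gaussian in \<open>(x, y)\<close>
  itself when \<open>t > 1\<close>.\<close>

section \<open>Bounds for the series of the modified Bessel function\<close>

lemma fact_mult_powr_le_Gamma:
  fixes nu :: real
  assumes "-1 < nu" "nu \<le> 0"
  shows "fact k * (real k + 1) powr nu \<le> Gamma (real k + nu + 1)"
proof -
  define x where "x = real k + nu + 1"
  have x_pos: "x > 0" using assms by (simp add: x_def)
  have Gamma_pos: "Gamma x > 0" using x_pos by (rule Gamma_real_pos)
  text \<open>Log-convexity of Gamma between \<open>x\<close> and \<open>x + 1\<close>, evaluated at \<open>k + 1\<close>.\<close>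
  have "(ln \<circ> Gamma) ((1 - (-nu)) *\<^sub>R x + (-nu) *\<^sub>R (x + 1))
        \<le> (1 - (-nu)) * (ln \<circ> Gamma) x + (-nu) * (ln \<circ> Gamma) (x + 1)"
    by (rule convex_onD[OF log_convex_Gamma_real]) (use assms x_pos in auto)
  moreover have "(1 - (-nu)) *\<^sub>R x + (-nu) *\<^sub>R (x + 1) = 1 + real k"
    by (simp add: x_def algebra_simps)
  moreover have "Gamma (x + 1) = x * Gamma x"
    using x_pos by (intro Gamma_plus1) (auto elim!: nonpos_Ints_cases')
  ultimately have "ln (fact k) \<le> (1 + nu) * ln (Gamma x) + (-nu) * ln (x * Gamma x)"
    using Gamma_pos by (simp add: Gamma_fact)
  also have "\<dots> = ln (Gamma x * x powr (-nu))"
    using x_pos Gamma_pos by (simp add: ln_mult_pos ln_powr algebra_simps)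
  finally have "fact k \<le> Gamma x * x powr (-nu)"
    using x_pos Gamma_pos by (subst (asm) ln_le_cancel_iff) auto
  hence "fact k * x powr nu \<le> Gamma x"
    using x_pos by (simp add: powr_minus field_simps)
  moreover have "(real k + 1) powr nu \<le> x powr nu"
    using assms x_pos by (intro powr_mono2') (auto simp: x_def)
  ultimately show ?thesis
    by (smt (verit) fact_ge_zero mult_left_mono x_def)
qed

lemma fact_double_squared_le:
  "(fact (2 * k) :: real)^2 * (3 * real k + 1) \<le> 16^k * (fact k)^4"
proof (induction k)
  case 0
  then show ?case by simp
next
  case (Suc k)
  define F where "F = (fact (2 * k) :: real)"
  define G where "G = (fact k :: real)"
  have fact_double_Suc: "(fact (2 * Suc k) :: real) = (2 * real k + 2) * (2 * real k + 1) * F"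
  proof -
    have "2 * Suc k = Suc (Suc (2 * k))" by simp
    hence "(fact (2 * Suc k) :: real)
             = of_nat (Suc (Suc (2 * k))) * (of_nat (Suc (2 * k)) * fact (2 * k))"
      by (simp only: fact_Suc of_nat_mult)
    thus ?thesis by (simp add: F_def algebra_simps)
  qed
  have poly: "(2 * real k + 1)^2 * (3 * real k + 4) \<le> 4 * (real k + 1)^2 * (3 * real k + 1)"
    by (simp add: power2_eq_square algebra_simps)
  have "(fact (2 * Suc k) :: real)^2 * (3 * real (Suc k) + 1)
      = 4 * (real k + 1)^2 * ((2 * real k + 1)^2 * (3 * real k + 4)) * F^2"
    by (simp add: fact_double_Suc F_def power2_eq_square algebra_simps)
  also have "\<dots> \<le> 4 * (real k + 1)^2 * (4 * (real k + 1)^2 * (3 * real k + 1)) * F^2"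
    by (intro mult_right_mono mult_left_mono poly) auto
  also have "\<dots> = 16 * (real k + 1)^4 * (F^2 * (3 * real k + 1))"
    by (simp add: power2_eq_square power4_eq_xxxx algebra_simps)
  also have "\<dots> \<le> 16 * (real k + 1)^4 * (16^k * G^4)"
    using Suc.IH by (intro mult_left_mono) (auto simp: F_def G_def)
  also have "\<dots> = 16^(Suc k) * (fact (Suc k))^4"
    by (simp add: G_def power_mult_distrib add.commute)
  finally show ?case .
qed

lemma fact_double_le:
  "fact (2 * k) * sqrt (3 * real k + 1) \<le> 4^k * (fact k :: real)^2"
proof -
  have "((4::real)^k)^2 = (4^2)^k" by (metis power_mult mult.commute)
  hence "(16::real)^k * (fact k)^4 = (4^k * (fact k)^2)^2"
    by (simp add: power_mult_distrib flip: power_mult)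
  hence "sqrt ((fact (2 * k))^2 * (3 * real k + 1)) \<le> 4^k * (fact k)^2"
    using real_sqrt_le_mono[OF fact_double_squared_le[of k]] by simp
  thus ?thesis by (simp add: real_sqrt_mult)
qed

lemma sums_even_le:
  fixes g :: "nat \<Rightarrow> real"
  assumes "g sums S" "\<And>n. g n \<ge> 0"
  shows "summable (\<lambda>k. g (2 * k))" "(\<Sum>k. g (2 * k)) \<le> S"
proof -
  have pairs: "(\<lambda>n. sum g {n * 2..<n * 2 + 2}) sums S"
    by (rule sums_group[OF assms(1)]) simp
  have le: "g (2 * n) \<le> sum g {n * 2..<n * 2 + 2}" for n
    using assms(2)[of "Suc (2 * n)"] by (simp add: numeral_2_eq_2 mult.commute)
  show summable: "summable (\<lambda>k. g (2 * k))"
    by (rule summable_comparison_test'[OF sums_summable[OF pairs], of 0]) (use le assms(2) in auto)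
  have "(\<Sum>k. g (2 * k)) \<le> (\<Sum>n. sum g {n * 2..<n * 2 + 2})"
    by (rule suminf_le[OF le summable sums_summable[OF pairs]])
  also have "\<dots> = S" using pairs by (simp add: sums_iff)
  finally show "(\<Sum>k. g (2 * k)) \<le> S" .
qed

lemma powr_le_tangent:
  fixes x l b :: real
  assumes "x > 0" "l > 0" "0 \<le> b" "b \<le> 1"
  shows "x powr b \<le> (1 - b) * l powr b + b * l powr (b - 1) * x"
proof -
  have "x powr b * l powr (1 - b) \<le> b * x + (1 - b) * l"
    by (rule Youngs_inequality_0) (use assms in auto)
  hence "x powr b * l powr (1 - b) * l powr (b - 1) \<le> (b * x + (1 - b) * l) * l powr (b - 1)"
    by (rule mult_right_mono) simp
  moreover have "l powr (1 - b) * l powr (b - 1) = 1"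
    using assms by (simp flip: powr_add)
  moreover have "l * l powr (b - 1) = l powr b"
    using assms by (simp add: powr_diff)
  ultimately show ?thesis by (simp add: algebra_simps)
qed

lemma exp_real_sums: "(\<lambda>n. z^n / fact n) sums exp (z :: real)"
  using exp_converges[of z] by (simp add: divide_inverse mult.commute)

lemma exp_real_weighted_sums:
  "(\<lambda>n. (real n + 1) * (z^n / fact n)) sums ((z + 1) * exp (z :: real))"
proof -
  have "real (Suc n) * (z^Suc n / fact (Suc n)) = z * (z^n / fact n)" for n
  proof -
    have "real (Suc n) * (z^Suc n / fact (Suc n))
            = ((1 + real n) * (z * z^n)) / ((1 + real n) * fact n)"
      by simp
    also have "\<dots> = z * z^n / fact n"
      by (rule mult_divide_mult_cancel_left) simp
    finally show ?thesis by simp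
  qed
  hence "(\<lambda>n. real (Suc n) * (z^Suc n / fact (Suc n))) sums (z * exp z)"
    using sums_mult[OF exp_real_sums[of z], of z] by simp
  hence "(\<lambda>n. real n * (z^n / fact n)) sums (z * exp z)"
    using sums_Suc_iff[of "\<lambda>n. real n * (z^n / fact n)"] by simp
  from sums_add[OF this exp_real_sums[of z]] show ?thesis
    by (simp add: algebra_simps add_divide_distrib)
qed

text \<open>The \<open>k\<close>-th term is dominated by the \<open>2k\<close>-th term of the series of
  \<open>(z/2)\<^sup>\<nu> e\<^sup>z (z+1)\<^sup>\<beta>\<close>, \<open>\<beta> = -\<nu> - 1/2\<close>, in which
  \<open>(n+1)\<^sup>\<beta>\<close> has been replaced by its tangent line at \<open>n + 1 = z + 1\<close>.\<close>
lemma besselI_term_le: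
  fixes nu z :: real
  assumes "-1 < nu" "nu < -1/2" "z > 0"
  defines "b \<equiv> -nu - 1/2" and "l \<equiv> z + 1"
  shows "(z / 2) powr (2 * real k + nu) / (fact k * Gamma (real k + nu + 1))
    \<le> (z / 2) powr nu * (z^(2 * k) / fact (2 * k)
         * ((1 - b) * l powr b + b * l powr (b - 1) * (real (2 * k) + 1)))"
proof -
  define w where "w = z / 2"
  have w_pos: "w > 0" using assms by (simp add: w_def)
  have b01: "0 \<le> b" "b \<le> 1" using assms by (auto simp: b_def)
  have l_pos: "l > 0" using assms by (simp add: l_def)
  define Q where "Q = (fact k :: real) * (real k + 1) powr nu"
  have Q_pos: "Q > 0" by (simp add: Q_def)
  have Gamma_ge: "Q \<le> Gamma (real k + nu + 1)"
    unfolding Q_def by (rule fact_mult_powr_le_Gamma) (use assms in auto)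
  have Gamma_step: "w powr (2 * real k + nu) / (fact k * Gamma (real k + nu + 1))
      \<le> w powr (2 * real k + nu) / (fact k * Q)"
    by (rule divide_left_mono) (use Gamma_ge Q_pos in \<open>auto intro!: mult_left_mono\<close>)
  have "w powr (2 * real k + nu) = w powr nu * w^(2 * k)"
    using powr_realpow[OF w_pos, of "2 * k"] by (simp add: powr_add)
  hence Q_eq: "w powr (2 * real k + nu) / (fact k * Q)
      = w powr nu * (w^(2 * k) / (fact k)^2) * (real k + 1) powr (-nu)"
    unfolding Q_def by (simp add: powr_minus divide_inverse power2_eq_square mult_ac)
  have binomial_step: "w^(2 * k) / (fact k)^2 \<le> z^(2 * k) / (fact (2 * k) * sqrt (3 * real k + 1))"
  proof -
    have "w^(2 * k) / (fact k)^2 = z^(2 * k) / (4^k * (fact k)^2)"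
      by (simp add: w_def power_divide power_mult)
    also have "\<dots> \<le> z^(2 * k) / (fact (2 * k) * sqrt (3 * real k + 1))"
      by (rule divide_left_mono[OF fact_double_le]) (use assms in auto)
    finally show ?thesis .
  qed
  have sqrt_step: "(real k + 1) powr (-nu) / sqrt (3 * real k + 1) \<le> (real k + 1) powr b"
  proof -
    have "(real k + 1) powr (-nu) = (real k + 1) powr b * sqrt (real k + 1)"
      by (simp add: b_def powr_half_sqrt[symmetric] flip: powr_add)
    moreover have "sqrt (real k + 1) \<le> sqrt (3 * real k + 1)" by simp
    ultimately show ?thesis by (simp add: divide_le_eq mult_left_mono)
  qed
  have tangent_step:
    "(real k + 1) powr b \<le> (1 - b) * l powr b + b * l powr (b - 1) * (real (2 * k) + 1)"
  proof -
    have "(real k + 1) powr b \<le> (1 - b) * l powr b + b * l powr (b - 1) * (real k + 1)"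
      by (rule powr_le_tangent) (use l_pos b01 in auto)
    also have "\<dots> \<le> (1 - b) * l powr b + b * l powr (b - 1) * (real (2 * k) + 1)"
      using b01 l_pos by (intro add_left_mono mult_left_mono) auto
    finally show ?thesis .
  qed
  note Gamma_step
  also note Q_eq
  also have "w powr nu * (w^(2 * k) / (fact k)^2) * (real k + 1) powr (-nu)
      \<le> w powr nu * (z^(2 * k) / (fact (2 * k) * sqrt (3 * real k + 1))) * (real k + 1) powr (-nu)"
    by (intro mult_right_mono mult_left_mono binomial_step) auto
  also have "\<dots> = w powr nu * (z^(2 * k) / fact (2 * k))
                 * ((real k + 1) powr (-nu) / sqrt (3 * real k + 1))"
    by simp
  also have "\<dots> \<le> w powr nu * (z^(2 * k) / fact (2 * k))
                 * ((1 - b) * l powr b + b * l powr (b - 1) * (real (2 * k) + 1))"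
    using sqrt_step tangent_step assms by (intro mult_left_mono) auto
  finally show ?thesis by (simp add: w_def mult.assoc)
qed

lemma besselI_le:
  fixes nu z :: real
  assumes "-1 < nu" "nu < -1/2" "z > 0"
  shows "besselI nu z \<le> (z / 2) powr nu * exp z * (z + 1) powr (-nu - 1/2)"
proof -
  define b where "b = -nu - 1/2"
  define l where "l = z + 1"
  have b01: "0 \<le> b" "b \<le> 1" using assms by (auto simp: b_def)
  have l_pos: "l > 0" using assms by (simp add: l_def)
  define A where "A = (1 - b) * l powr b"
  define B where "B = b * l powr (b - 1)"
  define g where "g n = z^n / fact n * (A + B * (real n + 1))" for n
  have g_nonneg: "g n \<ge> 0" for n
    unfolding g_def A_def B_def using assms b01 by (intro mult_nonneg_nonneg add_nonneg_nonneg) auto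
  have "(\<lambda>n. A * (z^n / fact n) + B * ((real n + 1) * (z^n / fact n)))
          sums (A * exp z + B * ((z + 1) * exp z))"
    by (intro sums_add sums_mult exp_real_sums exp_real_weighted_sums)
  moreover have "A * exp z + B * ((z + 1) * exp z) = exp z * l powr b"
  proof -
    have "B * l = b * l powr b" unfolding B_def using l_pos by (simp add: powr_diff)
    thus ?thesis unfolding A_def l_def[symmetric] by (simp add: algebra_simps)
  qed
  ultimately have g_sums: "g sums (exp z * l powr b)"
    unfolding g_def by (simp add: algebra_simps)
  note even = sums_even_le[OF g_sums g_nonneg]
  define T where "T k = (z / 2) powr (2 * real k + nu) / (fact k * Gamma (real k + nu + 1))" for k
  have T_le: "T k \<le> (z / 2) powr nu * g (2 * k)" for k
    using besselI_term_le[OF assms, of k] unfolding T_def g_def A_def B_def b_def l_def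
    by (simp add: algebra_simps)
  have T_nonneg: "T k \<ge> 0" for k
    using assms by (simp add: T_def)
  have summable_bound: "summable (\<lambda>k. (z / 2) powr nu * g (2 * k))"
    by (intro summable_mult even(1))
  have "summable T"
    by (rule summable_comparison_test'[OF summable_bound, of 0]) (use T_le T_nonneg in auto)
  have "besselI nu z = suminf T" unfolding besselI_def T_def ..
  also have "\<dots> \<le> (\<Sum>k. (z / 2) powr nu * g (2 * k))"
    by (rule suminf_le[OF T_le \<open>summable T\<close> summable_bound])
  also have "\<dots> = (z / 2) powr nu * (\<Sum>k. g (2 * k))"
    by (rule suminf_mult[OF even(1)])
  also have "\<dots> \<le> (z / 2) powr nu * (exp z * l powr b)"
    by (intro mult_left_mono even(2)) auto
  finally show ?thesis by (simp add: l_def b_def mult_ac)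
qed

lemma besselI_le_small:
  fixes nu z :: real
  assumes "-1 < nu" "nu < -1/2" "0 < z" "z \<le> 1"
  shows "besselI nu z \<le> 6 * (z / 2) powr nu"
proof -
  have "exp z \<le> exp 1" using assms by simp
  hence "exp z \<le> 3" using exp_le by linarith
  moreover have "(z + 1) powr (-nu - 1/2) \<le> 2"
  proof -
    have "(z + 1) powr (-nu - 1/2) \<le> 2 powr (-nu - 1/2)"
      using assms by (intro powr_mono2) auto
    also have "\<dots> \<le> 2 powr 1" using assms by (intro powr_mono) auto
    finally show ?thesis by simp
  qed
  ultimately have "exp z * (z + 1) powr (-nu - 1/2) \<le> 3 * 2"
    by (intro mult_mono) auto
  hence "(z / 2) powr nu * (exp z * (z + 1) powr (-nu - 1/2)) \<le> (z / 2) powr nu * 6"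
    by (intro mult_left_mono) auto
  thus ?thesis using besselI_le[OF assms(1-3)] by (simp add: mult_ac)
qed

lemma besselI_le_large:
  fixes nu z :: real
  assumes "-1 < nu" "nu < -1/2" "1 \<le> z"
  shows "besselI nu z \<le> 4 * exp z / sqrt z"
proof -
  define b where "b = -nu - 1/2"
  have z_pos: "z > 0" using assms by simp
  have "(z / 2) powr nu * (z + 1) powr b \<le> (z / 2) powr nu * (2 * z) powr b"
    using assms by (intro mult_left_mono powr_mono2) (auto simp: b_def)
  also have "\<dots> = (2 powr b / 2 powr nu) * (z powr nu * z powr b)"
  proof -
    have "(z / 2) powr nu = z powr nu / 2 powr nu" by (rule powr_divide)
    moreover have "(2 * z) powr b = 2 powr b * z powr b" by (rule powr_mult)
    ultimately show ?thesis by (simp only:) (simp add: field_simps)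
  qed
  also have "\<dots> = 2 powr (b - nu) * z powr (- (1/2))"
  proof -
    have "2 powr b / 2 powr nu = (2::real) powr (b - nu)" by (rule powr_diff[symmetric])
    moreover have "z powr nu * z powr b = z powr (nu + b)" by (rule powr_add[symmetric])
    ultimately show ?thesis by (simp add: b_def)
  qed
  also have "\<dots> = 2 powr (b - nu) / sqrt z"
    using z_pos by (simp add: powr_minus powr_half_sqrt inverse_eq_divide)
  also have "\<dots> \<le> 4 / sqrt z"
  proof -
    have "(2::real) powr (b - nu) \<le> 2 powr 2" using assms by (intro powr_mono) (auto simp: b_def)
    thus ?thesis using z_pos by (intro divide_right_mono) auto
  qed
  finally have "exp z * ((z / 2) powr nu * (z + 1) powr b) \<le> exp z * (4 / sqrt z)"
    by (intro mult_left_mono) auto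
  thus ?thesis using besselI_le[OF assms(1,2) z_pos] by (simp add: b_def mult_ac)
qed

section \<open>The heat kernel in Mehler form\<close>

text \<open>In hyperbolic terms \<open>a = coth(2t)/2\<close> and \<open>b = 1/(2 sinh(2t))\<close>, so \<open>a - b = tanh(t)/2\<close>
  is the Gaussian decay that survives when \<open>e\<^sup>2\<^sup>b\<^sup>x\<^sup>y\<close> is absorbed.\<close>
definition mehler_a :: "real \<Rightarrow> real" where
  "mehler_a t = (1/2) * ((1 + exp (-4 * t)) / (1 - exp (-4 * t)))"

definition mehler_b :: "real \<Rightarrow> real" where
  "mehler_b t = exp (-2 * t) / (1 - exp (-4 * t))"

lemma exp_neg_four_eq_square: "exp (-4 * t) = (exp (-2 * t :: real))^2"
  by (simp add: power2_eq_square flip: exp_add)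

lemma laguerre_heat_kernel_mehler:
  "laguerre_heat_kernel nu t x y
     = 2 * mehler_b t * sqrt (x * y) * exp (- mehler_a t * (x^2 + y^2))
       * besselI nu (2 * mehler_b t * x * y)"
proof -
  have sqrt_r: "sqrt (exp (-4 * t)) = exp (-2 * t)"
    unfolding exp_neg_four_eq_square by simp
  have "sqrt (exp (-4 * t) * x * y) = exp (-2 * t) * sqrt (x * y)"
    by (simp only: real_sqrt_mult sqrt_r mult.assoc)
  thus ?thesis
    unfolding laguerre_heat_kernel_def Let_def mehler_a_def mehler_b_def sqrt_r
    by (simp add: ac_simps)
qed

lemma mehler_b_pos: "t > 0 \<Longrightarrow> mehler_b t > 0"
  by (simp add: mehler_b_def)

lemma mehler_b_le_a:
  assumes "t > 0"
  shows "mehler_b t \<le> mehler_a t"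
proof -
  have "0 \<le> (exp (-2 * t) - 1)^2" by simp
  hence "2 * exp (-2 * t) \<le> 1 + exp (-4 * t)"
    unfolding exp_neg_four_eq_square by (simp add: power2_eq_square algebra_simps)
  hence "exp (-2 * t) / (1 - exp (-4 * t)) \<le> ((1 + exp (-4 * t)) / 2) / (1 - exp (-4 * t))"
    using assms by (intro divide_right_mono) auto
  thus ?thesis by (simp add: mehler_a_def mehler_b_def)
qed

lemma exp_two_bounds: "4 \<le> exp (2::real)" "exp (2::real) \<le> 9"
proof -
  have exp_two: "exp (2::real) = exp 1 * exp 1" by (simp flip: exp_add)
  have "(2::real) * 2 \<le> exp 1 * exp 1"
    using exp_ge_add_one_self[of "1::real"] by (intro mult_mono) auto
  thus "4 \<le> exp (2::real)" using exp_two by simp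
  have "exp (1::real) * exp 1 \<le> 3 * 3" by (intro mult_mono exp_le) auto
  thus "exp (2::real) \<le> 9" using exp_two by simp
qed

lemma mehler_b_bounds_small_time:
  assumes "0 < t" "t \<le> 1"
  shows "1 / (36 * t) \<le> mehler_b t" "mehler_b t \<le> 2 / t"
proof -
  define r where "r = exp (-4 * t)"
  define s where "s = exp (-2 * t)"
  have r01: "0 < r" "r < 1" and s01: "0 < s" "s < 1" using assms by (auto simp: r_def s_def)
  have b_eq: "mehler_b t = s / (1 - r)" by (simp add: mehler_b_def r_def s_def)
  have r_lower: "1 - r \<le> 4 * t" using exp_ge_add_one_self[of "-4 * t"] by (simp add: r_def)
  have r_upper: "4 * t / 5 \<le> 1 - r"
  proof -
    have "r = 1 / exp (4 * t)" by (simp add: r_def exp_minus inverse_eq_divide)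
    also have "\<dots> \<le> 1 / (1 + 4 * t)"
      using assms exp_ge_add_one_self[of "4 * t"] by (intro divide_left_mono) auto
    finally have "r \<le> 1 / (1 + 4 * t)" .
    moreover have "4 * t / 5 \<le> 1 - 1 / (1 + 4 * t)"
      using assms by (simp add: field_simps)
    ultimately show ?thesis by linarith
  qed
  have "1 / 9 \<le> s"
  proof -
    have "1 / 9 \<le> 1 / exp (2::real)" using exp_two_bounds by (intro divide_left_mono) auto
    also have "\<dots> = exp (-2)" by (simp add: exp_minus inverse_eq_divide)
    also have "\<dots> \<le> s" using assms by (simp add: s_def)
    finally show ?thesis .
  qed
  hence "(1/9) / (4 * t) \<le> s / (1 - r)"
    using r_lower r01 s01 assms by (intro frac_le) auto
  thus "1 / (36 * t) \<le> mehler_b t" by (simp add: b_eq)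
  have "s / (1 - r) \<le> 1 / (4 * t / 5)"
    using r_upper r01 s01 assms by (intro frac_le) auto
  also have "\<dots> \<le> 2 / t" using assms by (simp add: field_simps)
  finally show "mehler_b t \<le> 2 / t" by (simp add: b_eq)
qed

lemma mehler_bounds_large_time:
  assumes "1 < t"
  shows "2 * mehler_b t \<le> 1" "3/10 \<le> mehler_a t - mehler_b t"
proof -
  define r where "r = exp (-4 * t)"
  define s where "s = exp (-2 * t)"
  have r_eq: "r = s^2" unfolding r_def s_def by (rule exp_neg_four_eq_square)
  have r01: "0 < r" "r < 1" and s01: "0 < s" "s < 1" using assms by (auto simp: r_def s_def)
  have "s \<le> 1/4"
  proof -
    have "s \<le> exp (-2)" using assms by (simp add: s_def)
    also have "\<dots> = 1 / exp 2" by (simp add: exp_minus inverse_eq_divide)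
    also have "\<dots> \<le> 1 / 4" using exp_two_bounds by (intro divide_left_mono) auto
    finally show ?thesis .
  qed
  moreover have "s * s \<le> s * (1/4)"
    using \<open>s \<le> 1/4\<close> s01 by (intro mult_left_mono) auto
  ultimately have "2 * s \<le> 1 - r"
    by (simp add: r_eq power2_eq_square)
  thus "2 * mehler_b t \<le> 1"
    using r01 by (simp add: mehler_b_def r_def s_def field_simps)
  have "0 \<le> (1 - 4 * s) * (1 - s)" using \<open>s \<le> 1/4\<close> s01 by (intro mult_nonneg_nonneg) auto
  hence "3/10 * (2 * (1 - r)) \<le> 1 + r - 2 * s"
    by (simp add: r_eq power2_eq_square algebra_simps)
  hence "3/10 \<le> (1 + r - 2 * s) / (2 * (1 - r))"
    using r01 by (simp add: pos_le_divide_eq)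
  also have "\<dots> = (1/2) * ((1 + r) / (1 - r)) - (2 * s) / (2 * (1 - r))"
    by (simp add: diff_divide_distrib)
  also have "\<dots> = (1/2) * ((1 + r) / (1 - r)) - s / (1 - r)"
    by (subst mult_divide_mult_cancel_left) simp_all
  also have "\<dots> = mehler_a t - mehler_b t"
    by (simp add: mehler_a_def mehler_b_def r_def s_def)
  finally show "3/10 \<le> mehler_a t - mehler_b t" .
qed

section \<open>Pointwise estimates\<close>

lemma powr_mult_exp_neg_le_one:
  fixes u p :: real
  assumes "u \<ge> 0" "0 < p" "p \<le> 1"
  shows "u powr p * exp (-u) \<le> 1"
proof -
  have "u powr p \<le> 1 + u"
  proof (cases "u \<le> 1")
    case True
    hence "u powr p \<le> 1" using assms by (intro powr_le1) auto
    thus ?thesis using assms by simp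
  next
    case False
    hence "u powr p \<le> u powr 1" using assms by (intro powr_mono) auto
    thus ?thesis using False by simp
  qed
  also have "\<dots> \<le> exp u" by (rule exp_ge_add_one_self)
  finally have "u powr p * exp (-u) \<le> exp u * exp (-u)" by (rule mult_right_mono) simp
  thus ?thesis by (simp flip: exp_add)
qed

lemma exp_neg_quadratic_le_inverse:
  fixes u :: real
  assumes "u > 0"
  shows "exp (- (3/10) * u^2) \<le> 1 / u"
proof -
  have "0 \<le> (3/10) * (u - 5/3)^2 + 1/6" by simp
  hence "u \<le> 1 + (3/10) * u^2" by (simp add: power2_eq_square algebra_simps)
  also have "\<dots> \<le> exp ((3/10) * u^2)" by (rule exp_ge_add_one_self)
  finally have "u * exp (- (3/10) * u^2) \<le> exp ((3/10) * u^2) * exp (- (3/10) * u^2)"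
    by (rule mult_right_mono) simp
  hence "u * exp (- (3/10) * u^2) \<le> 1" by (simp flip: exp_add)
  thus ?thesis using assms by (simp add: field_simps)
qed

lemma sqrt_mult_powr_rearrange:
  fixes b x y nu :: real
  assumes "b > 0" "x > 0" "y > 0"
  shows "2 * b * sqrt (x * y) * (b * x * y) powr nu
         = 2 * (b * x^2) powr (nu + 1) * ((1 / x) * (x / y) powr (-1/2 - nu))"
proof -
  have "ln (2 * b * sqrt (x * y) * (b * x * y) powr nu)
      = ln 2 + ln b + (ln x + ln y) / 2 + nu * (ln b + ln x + ln y)"
    using assms by (simp add: ln_mult_pos ln_powr ln_sqrt)
  also have "\<dots> = ln 2 + (nu + 1) * (ln b + 2 * ln x) - ln x + (-1/2 - nu) * (ln x - ln y)"
    by (simp add: algebra_simps add_divide_distrib diff_divide_distrib)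
  also have "\<dots> = ln (2 * (b * x^2) powr (nu + 1) * ((1 / x) * (x / y) powr (-1/2 - nu)))"
    using assms by (simp add: ln_mult_pos ln_powr ln_div ln_realpow)
  finally show ?thesis using assms by simp
qed

lemma mehler_form_le_small:
  fixes nu a b x y :: real
  assumes "-1 < nu" "nu < -1/2" "0 < b" "b \<le> a" "x > 0" "y > 0" "2 * b * x * y \<le> 1"
  shows "2 * b * sqrt (x * y) * exp (- a * (x^2 + y^2)) * besselI nu (2 * b * x * y)
           \<le> 12 * ((1 / x) * (x / y) powr (-1/2 - nu))"
proof -
  define E where "E = exp (- a * (x^2 + y^2))"
  have E_le: "E \<le> exp (- (b * x^2))"
  proof -
    have "b * x^2 \<le> a * (x^2 + y^2)" using assms by (intro mult_mono) auto
    thus ?thesis by (simp add: E_def)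
  qed
  have "besselI nu (2 * b * x * y) \<le> 6 * (b * x * y) powr nu"
    using besselI_le_small[of nu "2 * b * x * y"] assms by (simp add: mult.assoc)
  hence "2 * b * sqrt (x * y) * E * besselI nu (2 * b * x * y)
      \<le> 2 * b * sqrt (x * y) * E * (6 * (b * x * y) powr nu)"
    using assms by (intro mult_left_mono) (auto simp: E_def)
  also have "\<dots> = 12 * (E * (b * x^2) powr (nu + 1)) * ((1 / x) * (x / y) powr (-1/2 - nu))"
    using sqrt_mult_powr_rearrange[of b x y nu] assms by (simp add: algebra_simps)
  also have "\<dots> \<le> 12 * 1 * ((1 / x) * (x / y) powr (-1/2 - nu))"
  proof -
    have "E * (b * x^2) powr (nu + 1) \<le> exp (- (b * x^2)) * (b * x^2) powr (nu + 1)"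
      using E_le by (intro mult_right_mono) auto
    also have "\<dots> \<le> 1"
      using powr_mult_exp_neg_le_one[of "b * x^2" "nu + 1"] assms by (simp add: mult.commute)
    finally show ?thesis using assms by (intro mult_right_mono mult_left_mono) auto
  qed
  finally show ?thesis by (simp add: E_def)
qed

lemma mehler_form_le_large:
  fixes nu a b x y :: real
  assumes "-1 < nu" "nu < -1/2" "0 < b" "x > 0" "y > 0" "1 \<le> 2 * b * x * y"
  shows "2 * b * sqrt (x * y) * exp (- a * (x^2 + y^2)) * besselI nu (2 * b * x * y)
           \<le> 4 * sqrt (2 * b) * exp (- a * (x^2 + y^2) + 2 * b * x * y)"
proof -
  define z where "z = 2 * b * x * y"
  define E where "E = exp (- a * (x^2 + y^2))"
  have z_pos: "z > 0" using assms by (simp add: z_def)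
  have "2 * b * sqrt (x * y) * E * besselI nu z \<le> 2 * b * sqrt (x * y) * E * (4 * exp z / sqrt z)"
    using besselI_le_large[of nu z] assms by (intro mult_left_mono) (auto simp: z_def E_def)
  also have "\<dots> = 4 * ((2 * b * sqrt (x * y)) / sqrt z) * (E * exp z)"
    by (simp add: field_simps)
  also have "(2 * b * sqrt (x * y)) / sqrt z = sqrt (2 * b)"
  proof -
    have "sqrt z = sqrt (2 * b) * sqrt (x * y)" by (simp add: z_def real_sqrt_mult mult.assoc)
    moreover have "2 * b = sqrt (2 * b) * sqrt (2 * b)" using assms by simp
    ultimately have "2 * b * sqrt (x * y) = sqrt (2 * b) * sqrt z" by (metis mult.assoc)
    thus ?thesis using z_pos by simp
  qed
  also have "E * exp z = exp (- a * (x^2 + y^2) + 2 * b * x * y)"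
    by (simp add: E_def z_def flip: exp_add)
  finally show ?thesis by (simp add: E_def z_def)
qed

definition off_diagonal_bound :: "real \<Rightarrow> real \<Rightarrow> real \<Rightarrow> real" where
  "off_diagonal_bound g x y =
     (if y < x / 2 then (1 / x) * (x / y) powr g else (1 / y) * (y / x) powr g)"

lemma mehler_form_le_off_diagonal_bound:
  fixes nu a b x y :: real
  assumes "-1 < nu" "nu < -1/2" "0 < b" "b \<le> a" "x > 0" "y > 0" "2 * b * x * y \<le> 1"
  shows "2 * b * sqrt (x * y) * exp (- a * (x^2 + y^2)) * besselI nu (2 * b * x * y)
           \<le> 12 * off_diagonal_bound (-1/2 - nu) x y"
proof (cases "y < x / 2")
  case True
  thus ?thesis using mehler_form_le_small[OF assms] by (simp add: off_diagonal_bound_def)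
next
  case False
  have "2 * b * y * x \<le> 1" using assms by (simp add: mult_ac)
  from mehler_form_le_small[OF assms(1-4,6,5) this] False show ?thesis
    by (simp add: off_diagonal_bound_def ac_simps)
qed

lemma exp_neg_quadratic_le_off_diagonal_bound:
  fixes g x y :: real
  assumes "0 \<le> g" "g \<le> 1" "x > 0" "y > 0"
  shows "exp (- (3/10) * (x^2 + y^2)) \<le> 2 * off_diagonal_bound g x y"
proof (cases "y < x / 2")
  case True
  have "exp (- (3/10) * (x^2 + y^2)) \<le> exp (- (3/10) * x^2)" by simp
  also have "\<dots> \<le> 1 / x" by (rule exp_neg_quadratic_le_inverse[OF assms(3)])
  also have "\<dots> \<le> (1 / x) * (x / y) powr g"
  proof -
    have "1 \<le> (x / y) powr g" using True assms by (intro ge_one_powr_ge_zero) auto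
    thus ?thesis using assms by (simp add: divide_right_mono)
  qed
  also have "\<dots> \<le> 2 * ((1 / x) * (x / y) powr g)" using assms by (simp add: field_simps)
  finally show ?thesis using True by (simp add: off_diagonal_bound_def)
next
  case False
  have "exp (- (3/10) * (x^2 + y^2)) \<le> exp (- (3/10) * y^2)" by simp
  also have "\<dots> \<le> 1 / y" by (rule exp_neg_quadratic_le_inverse[OF assms(4)])
  also have "\<dots> \<le> 2 * ((1 / y) * (y / x) powr g)"
  proof -
    have "(1/2::real) = (1/2) powr 1" by simp
    also have "\<dots> \<le> (1/2) powr g" using assms by (intro powr_mono') auto
    also have "\<dots> \<le> (y / x) powr g" using False assms by (intro powr_mono2) auto
    finally show ?thesis using assms by (simp add: field_simps)
  qed
  finally show ?thesis using False by (simp add: off_diagonal_bound_def)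
qed

lemma laguerre_heat_kernel_le:
  fixes nu t x y :: real
  assumes "-1 < nu" "nu < -1/2" "t > 0" "x > 0" "y > 0"
  shows "laguerre_heat_kernel nu t x y
           \<le> 12 * (1 / sqrt t * exp (- (\<bar>x - y\<bar>^2) / (36 * t))
                     + off_diagonal_bound (-1/2 - nu) x y)"
proof -
  define a where "a = mehler_a t"
  define b where "b = mehler_b t"
  define G where "G = 1 / sqrt t * exp (- (\<bar>x - y\<bar>^2) / (36 * t))"
  define W where "W = off_diagonal_bound (-1/2 - nu) x y"
  have b_pos: "0 < b" and b_le_a: "b \<le> a"
    using assms mehler_b_pos mehler_b_le_a by (auto simp: a_def b_def)
  have kernel: "laguerre_heat_kernel nu t x y
      = 2 * b * sqrt (x * y) * exp (- a * (x^2 + y^2)) * besselI nu (2 * b * x * y)"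
    unfolding a_def b_def by (rule laguerre_heat_kernel_mehler)
  have G_nonneg: "G \<ge> 0" and W_nonneg: "W \<ge> 0"
    using assms by (auto simp: G_def W_def off_diagonal_bound_def)
  consider "2 * b * x * y \<le> 1" | "1 \<le> 2 * b * x * y" "t \<le> 1" | "1 \<le> 2 * b * x * y" "1 < t"
    by linarith
  hence "laguerre_heat_kernel nu t x y \<le> 12 * G \<or> laguerre_heat_kernel nu t x y \<le> 12 * W"
  proof cases
    case 1
    thus ?thesis
      using mehler_form_le_off_diagonal_bound[OF assms(1,2) b_pos b_le_a assms(4,5)]
      by (simp add: kernel W_def)
  next
    case 2
    have "1 / (36 * t) * (x - y)^2 \<le> b * (x - y)^2"
      using mehler_b_bounds_small_time(1)[of t] assms 2 by (intro mult_right_mono) (auto simp: b_def)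
    moreover have "- a * (x^2 + y^2) + 2 * b * x * y \<le> - b * (x^2 + y^2) + 2 * b * x * y"
      using b_le_a by (simp add: mult_right_mono)
    moreover have "- b * (x^2 + y^2) + 2 * b * x * y = - (b * (x - y)^2)"
      by (simp add: power2_eq_square algebra_simps)
    ultimately have exponent: "- a * (x^2 + y^2) + 2 * b * x * y \<le> - (\<bar>x - y\<bar>^2) / (36 * t)"
      by simp
    have "sqrt (2 * b) \<le> sqrt (4 / t)"
      using mehler_b_bounds_small_time(2)[of t] assms 2 by (simp add: b_def)
    hence "sqrt (2 * b) \<le> 2 / sqrt t" by (simp add: real_sqrt_divide)
    hence "4 * sqrt (2 * b) * exp (- a * (x^2 + y^2) + 2 * b * x * y)
        \<le> 4 * (2 / sqrt t) * exp (- (\<bar>x - y\<bar>^2) / (36 * t))"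
      using exponent b_pos assms by (intro mult_mono) auto
    moreover have "4 * (2 / sqrt t) * exp (- (\<bar>x - y\<bar>^2) / (36 * t)) \<le> 12 * G"
      using assms by (simp add: G_def field_simps)
    ultimately show ?thesis
      using mehler_form_le_large[where a = a, OF assms(1,2) b_pos assms(4,5) 2(1)]
      unfolding kernel by linarith
  next
    case 3
    have "b * (2 * x * y) \<le> b * (x^2 + y^2)"
      using b_pos sum_squares_bound[of x y] by (intro mult_left_mono) auto
    moreover have "(3/10) * (x^2 + y^2) \<le> (a - b) * (x^2 + y^2)"
      using mehler_bounds_large_time(2)[OF 3(2)] by (intro mult_right_mono) (auto simp: a_def b_def)
    ultimately have exponent: "- a * (x^2 + y^2) + 2 * b * x * y \<le> - (3/10) * (x^2 + y^2)"
      by (simp add: algebra_simps)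
    have "sqrt (2 * b) \<le> 1"
      using mehler_bounds_large_time(1)[OF 3(2)] by (simp add: b_def)
    hence "4 * sqrt (2 * b) * exp (- a * (x^2 + y^2) + 2 * b * x * y)
        \<le> 4 * 1 * exp (- (3/10) * (x^2 + y^2))"
      using exponent b_pos by (intro mult_mono) auto
    also have "\<dots> \<le> 4 * (2 * W)"
      using exp_neg_quadratic_le_off_diagonal_bound[of "-1/2 - nu" x y] assms
      by (simp add: W_def)
    finally show ?thesis
      using mehler_form_le_large[where a = a, OF assms(1,2) b_pos assms(4,5) 3(1)] W_nonneg
      unfolding kernel by linarith
  qed
  thus ?thesis using G_nonneg W_nonneg by (auto simp: G_def W_def)
qed

theorem lemma3p2:
  fixes nu :: real
  assumes "-1 < nu" and "nu < -1/2"
  shows "\<exists>C c. C > 0 \<and> c > 0 \<and>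
    (\<forall>t x y. t > 0 \<longrightarrow> x > 0 \<longrightarrow> y > 0 \<longrightarrow>
      laguerre_heat_kernel nu t x y \<le>
        C * (1 / sqrt t * exp (- (\<bar>x - y\<bar>^2) / (c * t))
             + (1 / x) * (x / y) powr (-1/2 - nu) * indicator {y. y < x / 2} y
             + (1 / y) * (y / x) powr (-1/2 - nu) * indicator {y. x / 2 \<le> y} y))"
proof -
  have "laguerre_heat_kernel nu t x y \<le>
        12 * (1 / sqrt t * exp (- (\<bar>x - y\<bar>^2) / (36 * t))
             + (1 / x) * (x / y) powr (-1/2 - nu) * indicator {y. y < x / 2} y
             + (1 / y) * (y / x) powr (-1/2 - nu) * indicator {y. x / 2 \<le> y} y)"
    if "t > 0" "x > 0" "y > 0" for t x y :: real
  proof -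
    have "off_diagonal_bound (-1/2 - nu) x y
        = (1 / x) * (x / y) powr (-1/2 - nu) * indicator {y. y < x / 2} y
          + (1 / y) * (y / x) powr (-1/2 - nu) * indicator {y. x / 2 \<le> y} y"
      by (simp add: off_diagonal_bound_def indicator_def)
    with laguerre_heat_kernel_le[OF assms that] show ?thesis
      by (simp add: add.assoc)
  qed
  thus ?thesis by (intro exI[of _ "12::real"] exI[of _ "36::real"]) auto
qed

end
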